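(* Let $f$ be a set function on all subsets of $\mathcal{I}$ that is monotone and subadditive over $2^{\mathcal{I}}$, and let $p(\mathbf{Q},E)=f(\overline{\mathcal{S}}_{\mathbf{Q}}(E))$. Then for every non-constant query bundle $\mathbf{Q}\in B(\mathcal{L})$ there exists a database $D\in\mathcal{I}$ such that $p(\mathbf{Q},\mathbf{Q}(D))\ge \tfrac12 f(\mathcal{I}\setminus\{D\})$, i.e. the price of $\mathbf{Q}$ under $D$ is at least half the price of the whole database $D$.
   Context: $\mathcal{I}$ is a countable nonempty set of database instances; queries are deterministic functions on $\mathcal{I}$; a query bundle is a finite tuple of queries from a language $\mathcal{L}$, evaluated componentwise; $B(\mathcal{L})$ is the set of bundles. A bundle $\mathbf{Q}$ is non-constant if $\mathbf{Q}(D_0)\ne\mathbf{Q}(D_1)$ for some $D_0,D_1\in\mathcal{I}$. Conflict set: $\overline{\mathcal{S}}_{\mathbf{Q}}(E)=\{D'\in\mathcal{I}:\mathbf{Q}(D')\ne E\}$. The price of the whole database $D$ is $f(\mathcal{I}\setminus\{D\})$, the price of a bundle revealing $D$ completely. Monotone: $A\subseteq B\Rightarrow f(A)\le f(B)$; subadditive: $f(A\cup B)\le f(A)+f(B)$, for all $A,B\subseteq\mathcal{I}$. *)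

theory Defs
  imports Complex_Main "HOL-Library.Countable_Set"
begin

definition eval_bundle :: "('d \<Rightarrow> 'a) list \<Rightarrow> 'd \<Rightarrow> 'a list" where
  "eval_bundle Q D = map (\<lambda>q. q D) Q"

definition bundles :: "('d \<Rightarrow> 'a) set \<Rightarrow> ('d \<Rightarrow> 'a) list set" where
  "bundles L = lists L"

definition non_constant :: "'d set \<Rightarrow> ('d \<Rightarrow> 'a) list \<Rightarrow> bool" where
  "non_constant I Q \<longleftrightarrow> (\<exists>D0\<in>I. \<exists>D1\<in>I. eval_bundle Q D0 \<noteq> eval_bundle Q D1)"

definition conflict_set :: "'d set \<Rightarrow> ('d \<Rightarrow> 'a) list \<Rightarrow> 'a list \<Rightarrow> 'd set" where
  "conflict_set I Q E = {D' \<in> I. eval_bundle Q D' \<noteq> E}"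

definition monotone_sf :: "'d set \<Rightarrow> ('d set \<Rightarrow> real) \<Rightarrow> bool" where
  "monotone_sf I f \<longleftrightarrow> (\<forall>A B. A \<subseteq> B \<and> B \<subseteq> I \<longrightarrow> f A \<le> f B)"

definition subadditive_sf :: "'d set \<Rightarrow> ('d set \<Rightarrow> real) \<Rightarrow> bool" where
  "subadditive_sf I f \<longleftrightarrow> (\<forall>A B. A \<subseteq> I \<and> B \<subseteq> I \<longrightarrow> f (A \<union> B) \<le> f A + f B)"

definition price :: "'d set \<Rightarrow> ('d set \<Rightarrow> real) \<Rightarrow> ('d \<Rightarrow> 'a) list \<Rightarrow> 'a list \<Rightarrow> real" where
  "price I f Q E = f (conflict_set I Q E)"

end

theory Submission
  imports Defs
begin

text \<open>Two databases D0, D1 with different answers have conflict sets covering \<open>I\<close>: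
every database disagrees with at least one of the two answers. By subadditivity one of
the two conflict sets has price at least \<open>f I / 2\<close>, and by monotonicity
\<open>f I \<ge> f (I - {D})\<close>.\<close>

lemma conflict_set_subset: "conflict_set I Q E \<subseteq> I"
  unfolding conflict_set_def by auto

lemma conflict_sets_cover:
  assumes "E0 \<noteq> E1"
  shows "conflict_set I Q E0 \<union> conflict_set I Q E1 = I"
  using assms unfolding conflict_set_def by auto

lemma subadditive_sf_max_ge_half:
  assumes "subadditive_sf I f" and "A \<subseteq> I" and "B \<subseteq> I"
  shows "max (f A) (f B) \<ge> f (A \<union> B) / 2"
proof -
  have "f (A \<union> B) \<le> f A + f B"
    using assms unfolding subadditive_sf_def by blast
  then show ?thesis by linarith
qed

theorem lemma8:
  fixes I :: "'d set" and L :: "('d \<Rightarrow> 'a) set" and f :: "'d set \<Rightarrow> real"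
    and Q :: "('d \<Rightarrow> 'a) list"
  assumes "countable I" and "I \<noteq> {}"
    and "monotone_sf I f" and "subadditive_sf I f"
    and "Q \<in> bundles L" and "non_constant I Q"
  shows "\<exists>D\<in>I. price I f Q (eval_bundle Q D) \<ge> f (I - {D}) / 2"
proof -
  obtain D0 D1 where D: "D0 \<in> I" "D1 \<in> I" "eval_bundle Q D0 \<noteq> eval_bundle Q D1"
    using \<open>non_constant I Q\<close> unfolding non_constant_def by blast
  define p where "p D = price I f Q (eval_bundle Q D)" for D
  have "f (conflict_set I Q (eval_bundle Q D0) \<union> conflict_set I Q (eval_bundle Q D1)) / 2
      \<le> max (p D0) (p D1)"
    unfolding p_def price_def
    by (rule subadditive_sf_max_ge_half[OF \<open>subadditive_sf I f\<close> conflict_set_subset conflict_set_subset])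
  then have half: "f I / 2 \<le> max (p D0) (p D1)"
    by (simp only: conflict_sets_cover[OF D(3)])
  obtain D where "D \<in> I" and D_max: "p D = max (p D0) (p D1)"
    using D(1,2) by (cases "p D1 \<le> p D0") (simp_all add: max_def)
  have "f (I - {D}) \<le> f I"
    using \<open>monotone_sf I f\<close> unfolding monotone_sf_def by (meson Diff_subset order_refl)
  with half D_max have "f (I - {D}) / 2 \<le> p D"
    by linarith
  with \<open>D \<in> I\<close> show ?thesis
    unfolding p_def by blast
qed

end
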